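(* There is a universal constant $C$ such that the following holds. Let $G=(V,E,m,w)$ be a weighted graph with an intrinsic metric $\rho$ such that all balls $B_R(x)$ are finite and the jump size $s=\sup_{x\sim y}\rho(x,y)$ is finite, and fix $x_0\in V$. For any ancient solution $u$ of $D_t u=\Delta u$ on $V\times\mathbb{Z}_-$ and any $R\in\mathbb{N}$ with $R\ge s$, $$R^2\sum_{\widetilde{Q}_R}\Gamma(u)+R^4\sum_{\widetilde{Q}_R}(D_t u)^2\le C\sum_{\widetilde{Q}_{9R}}u^2.$$
   Context: A weighted graph $G=(V,E,m,w)$ consists of a locally finite, simple, undirected, connected graph $(V,E)$, a symmetric edge weight $w:E\to(0,\infty)$ (extended by $w_{xy}=0$ if $x\not\sim y$), and a vertex weight $m:V\to(0,\infty)$. The Laplacian is $\Delta f(x)=\sum_{y\sim x}\frac{w_{xy}}{m_x}(f(y)-f(x))$. A (pseudo)metric $\rho$ on $V$ is intrinsic if $\sum_{y\sim x}w_{xy}\rho^2(x,y)\le m_x$ for all $x$; $B_R(x)=\{y:\rho(y,x)\le R\}$, $B_R:=B_R(x_0)$. $\mathbb{Z}_-=\mathbb{Z}\cap(-\infty,0]$; $D_t u(x,t)=u(x,t)-u(x,t-1)$; an ancient solution is $u:V\times\mathbb{Z}_-\to\mathbb{R}$ with $D_tu=\Delta u$ for all $(x,t)$. $\Gamma(f)(x)=\frac12\sum_{y}\frac{w_{xy}}{m_x}(f(y)-f(x))^2$, applied to $u(\cdot,t)$. $\widetilde{Q}_R=B_R\times([-R^2,0]\cap\mathbb{Z})$ and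 $\sum_{\widetilde{Q}_R}F:=\sum_{t=-R^2}^0\sum_{x\in B_R}F(x,t)m_x$. *)

theory Defs
  imports Complex_Main
begin

text \<open>Vertices are natural numbers; the vertex set is V. Edge weight w is extended by 0
  off the edge set; x ~ y iff w x y > 0.\<close>

definition nbrs :: "(nat \<Rightarrow> nat \<Rightarrow> real) \<Rightarrow> nat \<Rightarrow> nat set" where
  "nbrs w x = {y. w x y > 0}"

definition weighted_graph :: "nat set \<Rightarrow> (nat \<Rightarrow> nat \<Rightarrow> real) \<Rightarrow> (nat \<Rightarrow> real) \<Rightarrow> bool" where
  "weighted_graph V w m \<longleftrightarrow>
     V \<noteq> {} \<and>
     (\<forall>x y. w x y = w y x) \<and> (\<forall>x y. w x y \<ge> 0) \<and> (\<forall>x. w x x = 0) \<and>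
     (\<forall>x y. w x y > 0 \<longrightarrow> x \<in> V \<and> y \<in> V) \<and>
     (\<forall>x\<in>V. m x > 0) \<and>
     (\<forall>x\<in>V. finite (nbrs w x)) \<and>
     (\<forall>x\<in>V. \<forall>y\<in>V. (x, y) \<in> {(a, b). w a b > 0}\<^sup>*)"

definition laplacian :: "(nat \<Rightarrow> nat \<Rightarrow> real) \<Rightarrow> (nat \<Rightarrow> real) \<Rightarrow> (nat \<Rightarrow> real) \<Rightarrow> nat \<Rightarrow> real" where
  "laplacian w m f x = (\<Sum>y\<in>nbrs w x. w x y / m x * (f y - f x))"

definition Gamma :: "(nat \<Rightarrow> nat \<Rightarrow> real) \<Rightarrow> (nat \<Rightarrow> real) \<Rightarrow> (nat \<Rightarrow> real) \<Rightarrow> nat \<Rightarrow> real" where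
  "Gamma w m f x = (1/2) * (\<Sum>y\<in>nbrs w x. w x y / m x * (f y - f x)^2)"

definition intrinsic_pseudometric ::
  "nat set \<Rightarrow> (nat \<Rightarrow> nat \<Rightarrow> real) \<Rightarrow> (nat \<Rightarrow> real) \<Rightarrow> (nat \<Rightarrow> nat \<Rightarrow> real) \<Rightarrow> bool" where
  "intrinsic_pseudometric V w m \<rho> \<longleftrightarrow>
     (\<forall>x\<in>V. \<rho> x x = 0) \<and>
     (\<forall>x\<in>V. \<forall>y\<in>V. \<rho> x y \<ge> 0 \<and> \<rho> x y = \<rho> y x) \<and>
     (\<forall>x\<in>V. \<forall>y\<in>V. \<forall>z\<in>V. \<rho> x z \<le> \<rho> x y + \<rho> y z) \<and>
     (\<forall>x\<in>V. (\<Sum>y\<in>nbrs w x. w x y * (\<rho> x y)^2) \<le> m x)"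

definition rball :: "nat set \<Rightarrow> (nat \<Rightarrow> nat \<Rightarrow> real) \<Rightarrow> nat \<Rightarrow> real \<Rightarrow> nat set" where
  "rball V \<rho> x R = {y\<in>V. \<rho> y x \<le> R}"

definition ancient_solution ::
  "nat set \<Rightarrow> (nat \<Rightarrow> nat \<Rightarrow> real) \<Rightarrow> (nat \<Rightarrow> real) \<Rightarrow> (nat \<Rightarrow> int \<Rightarrow> real) \<Rightarrow> bool" where
  "ancient_solution V w m u \<longleftrightarrow>
     (\<forall>x\<in>V. \<forall>t::int. t \<le> 0 \<longrightarrow> u x t - u x (t - 1) = laplacian w m (\<lambda>y. u y t) x)"

definition Dt :: "(nat \<Rightarrow> int \<Rightarrow> real) \<Rightarrow> nat \<Rightarrow> int \<Rightarrow> real" where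
  "Dt u x t = u x t - u x (t - 1)"

definition sumQ :: "nat set \<Rightarrow> (nat \<Rightarrow> nat \<Rightarrow> real) \<Rightarrow> (nat \<Rightarrow> real) \<Rightarrow> nat \<Rightarrow> nat
                    \<Rightarrow> (nat \<Rightarrow> int \<Rightarrow> real) \<Rightarrow> real" where
  "sumQ V \<rho> m x0 R F = (\<Sum>t\<in>{- ((int R)^2)..0}. \<Sum>x\<in>rball V \<rho> x0 (real R). F x t * m x)"

end

theory Submission
  imports Defs
begin

text \<open>Write u_k = u(\<cdot>, -k), so that the equation reads u_{k+1} = u_k - \<Delta>u_k. Testing this
  identity against \<eta>^2 u_k, with \<eta> a cutoff that is 1/R-Lipschitz for \<rho>, and summing by parts
  over the edges gives a Caccioppoli inequality: the decrease in k of the localized mass of u_k plus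
  the energy of \<eta> u_k is at most R^-2 times the mass of u_k on B_{9R}. The errors created by the
  cutoff are controlled exactly by the intrinsic condition sum_y w_xy \<rho>(x,y)^2 \<le> m_x. Testing
  against \<eta>^2 D_t u bounds the time derivative by the energy in the same way. Telescoping in k and
  averaging the final time over a window of length R^2 turns both into space-time bounds, with
  C = 4. Since jumps are no longer than R, the neighbours of every vertex in the support of a
  cutoff stay in B_{9R}, so all sums run over one finite ball.\<close>

lemma sum_sum_swap_symmetric:
  fixes F :: "'a \<Rightarrow> 'a \<Rightarrow> real"
  assumes "\<And>x y. w x y = w y x"
  shows "(\<Sum>x\<in>A. \<Sum>y\<in>A. w x y * F x y) = (\<Sum>x\<in>A. \<Sum>y\<in>A. w x y * F y x)"
proof -
  have "(\<Sum>x\<in>A. \<Sum>y\<in>A. w x y * F x y) = (\<Sum>y\<in>A. \<Sum>x\<in>A. w x y * F x y)"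
    by (rule sum.swap)
  also have "\<dots> = (\<Sum>y\<in>A. \<Sum>x\<in>A. w y x * F x y)"
    using assms by (intro sum.cong refl) metis
  finally show ?thesis .
qed

lemma sum_by_parts_symmetric:
  fixes f h :: "'a \<Rightarrow> real"
  assumes "\<And>x y. w x y = w y x"
  shows "(\<Sum>x\<in>A. \<Sum>y\<in>A. w x y * (f x * (h y - h x))) =
    - (\<Sum>x\<in>A. \<Sum>y\<in>A. w x y * ((f y - f x) * (h y - h x))) / 2"
proof -
  let ?S = "\<Sum>x\<in>A. \<Sum>y\<in>A. w x y * (f x * (h y - h x))"
  have swapped: "?S = (\<Sum>x\<in>A. \<Sum>y\<in>A. w x y * (f y * (h x - h y)))"
    by (rule sum_sum_swap_symmetric[OF assms])
  have "?S + ?S = (\<Sum>x\<in>A. \<Sum>y\<in>A. w x y * (f x * (h y - h x)) + w x y * (f y * (h x - h y)))"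
    by (subst (2) swapped) (simp add: sum.distrib)
  also have "\<dots> = - (\<Sum>x\<in>A. \<Sum>y\<in>A. w x y * ((f y - f x) * (h y - h x)))"
    by (simp add: sum_negf[symmetric] algebra_simps)
  finally show ?thesis by linarith
qed

lemma half_diff_squares_le: "((a::real)^2 - b^2) / 2 \<le> a * (a - b)"
  using zero_le_power2[of "a - b"] by (simp add: power2_eq_square field_simps)

lemma product_le_half_sum_squares: "(a::real) * b \<le> (a^2 + b^2) / 2"
  using sum_squares_bound[of a b] by simp

lemma clamp_lipschitz: "\<bar>min 1 (max 0 a) - min 1 (max 0 b)\<bar> \<le> \<bar>a - (b::real)\<bar>"
  by (simp add: min_def max_def abs_if)

lemma sum_nonpos_int_eq_sum_nat:
  "(\<Sum>t\<in>{- int N..0}. f t) = (\<Sum>k\<le>N. (f (- int k) :: real))"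
  by (rule sum.reindex_bij_witness[of _ "\<lambda>k. - int k" "\<lambda>t. nat (- t)"]) auto

text \<open>A one-step inequality with a nonnegative potential E bounded by b telescopes; averaging the
  endpoint over the last N steps turns the boundary term b n into an average of b.\<close>

lemma telescoping_average:
  fixes a b E :: "nat \<Rightarrow> real" and c :: real and N L :: nat
  assumes step: "\<And>k. a k + E k - E (Suc k) \<le> c * b k / N"
    and E_nonneg: "\<And>k. 0 \<le> E k" and E_le: "\<And>k. E k \<le> b k"
    and a_nonneg: "\<And>k. 0 \<le> a k" and b_nonneg: "\<And>k. 0 \<le> b k"
    and "0 \<le> c" and "0 < N"
  shows "N * (\<Sum>k\<le>L. a k) \<le> (1 + c) * (\<Sum>k\<le>L + N. b k)"
proof -
  define S where "S = (\<Sum>k\<le>L + N. b k)"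
  define I where "I = {L<..L + N}"
  have partial: "(\<Sum>k<n. a k) \<le> b n + c * (\<Sum>k<n. b k) / N" for n
  proof -
    have "(\<Sum>k<n. a k + E k - E (Suc k)) \<le> (\<Sum>k<n. c * b k / N)"
      by (rule sum_mono) (rule step)
    moreover have "(\<Sum>k<n. a k + E k - E (Suc k)) = (\<Sum>k<n. a k) + (E 0 - E n)"
      by (simp add: sum.distrib sum_lessThan_telescope' add_diff_eq[symmetric])
    moreover have "(\<Sum>k<n. c * b k / N) = c * (\<Sum>k<n. b k) / N"
      by (simp add: sum_divide_distrib sum_distrib_left)
    ultimately show ?thesis using E_nonneg[of 0] E_le[of n] by linarith
  qed
  have endpoint: "(\<Sum>k\<le>L. a k) \<le> b n + c * S / N" if "n \<in> I" for n
  proof -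
    have "(\<Sum>k\<le>L. a k) \<le> (\<Sum>k<n. a k)"
      using that unfolding I_def by (intro sum_mono2) (auto intro: a_nonneg)
    also have "\<dots> \<le> b n + c * (\<Sum>k<n. b k) / N" by (rule partial)
    also have "(\<Sum>k<n. b k) \<le> S"
      using that unfolding I_def S_def by (intro sum_mono2) (auto intro: b_nonneg)
    then have "c * (\<Sum>k<n. b k) / N \<le> c * S / N"
      using \<open>0 \<le> c\<close> by (intro divide_right_mono mult_left_mono) auto
    finally show ?thesis by simp
  qed
  have "N * (\<Sum>k\<le>L. a k) = (\<Sum>n\<in>I. \<Sum>k\<le>L. a k)"
    unfolding I_def by simp
  also have "\<dots> \<le> (\<Sum>n\<in>I. b n + c * S / N)"
    by (rule sum_mono) (rule endpoint)
  also have "\<dots> = (\<Sum>n\<in>I. b n) + c * S"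
    using \<open>0 < N\<close> unfolding I_def by (simp add: sum.distrib)
  also have "(\<Sum>n\<in>I. b n) \<le> S"
    unfolding I_def S_def by (intro sum_mono2) (auto intro: b_nonneg)
  finally show ?thesis unfolding S_def by (simp add: algebra_simps)
qed

locale wgraph =
  fixes V :: "nat set" and w :: "nat \<Rightarrow> nat \<Rightarrow> real" and m :: "nat \<Rightarrow> real"
  assumes weighted_graph: "weighted_graph V w m"
begin

lemma weight_sym: "w x y = w y x"
  using weighted_graph unfolding weighted_graph_def by blast

lemma weight_nonneg: "0 \<le> w x y"
  using weighted_graph unfolding weighted_graph_def by blast

lemma weight_pos_imp_in_V: "w x y > 0 \<Longrightarrow> x \<in> V \<and> y \<in> V"
  using weighted_graph unfolding weighted_graph_def by blast

lemma weight_eq_0: "\<not> w x y > 0 \<Longrightarrow> w x y = 0"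
  using weight_nonneg[of x y] by linarith

lemma measure_pos: "x \<in> V \<Longrightarrow> m x > 0"
  using weighted_graph unfolding weighted_graph_def by blast

lemma finite_nbrs: "x \<in> V \<Longrightarrow> finite (nbrs w x)"
  using weighted_graph unfolding weighted_graph_def by blast

lemma sum_nbrs_eq_sum_superset:
  assumes "finite A" "nbrs w x \<subseteq> A"
  shows "(\<Sum>y\<in>nbrs w x. w x y * f y) = (\<Sum>y\<in>A. w x y * f y)"
  by (rule sum.mono_neutral_left[OF assms]) (auto simp: nbrs_def weight_eq_0)

lemma sum_superset_le_sum_nbrs:
  assumes "x \<in> V" "finite A" "\<And>y. 0 \<le> f y"
  shows "(\<Sum>y\<in>A. w x y * f y) \<le> (\<Sum>y\<in>nbrs w x. w x y * f y)"
proof -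
  have "(\<Sum>y\<in>A. w x y * f y) = (\<Sum>y\<in>A \<inter> nbrs w x. w x y * f y)"
    by (rule sum.mono_neutral_right[OF \<open>finite A\<close>]) (auto simp: nbrs_def weight_eq_0)
  also have "\<dots> \<le> (\<Sum>y\<in>nbrs w x. w x y * f y)"
    using assms by (intro sum_mono2 finite_nbrs mult_nonneg_nonneg weight_nonneg) auto
  finally show ?thesis .
qed

lemma laplacian_eq_sum:
  assumes "x \<in> V" "finite A" "nbrs w x \<subseteq> A"
  shows "m x * laplacian w m h x = (\<Sum>y\<in>A. w x y * (h y - h x))"
proof -
  have "m x * laplacian w m h x = (\<Sum>y\<in>nbrs w x. w x y * (h y - h x))"
    unfolding laplacian_def sum_distrib_left using measure_pos[OF \<open>x \<in> V\<close>]
    by (intro sum.cong refl) simp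
  also have "\<dots> = (\<Sum>y\<in>A. w x y * (h y - h x))"
    using assms(2,3) by (rule sum_nbrs_eq_sum_superset)
  finally show ?thesis .
qed

lemma Gamma_eq_sum:
  assumes "x \<in> V" "finite A" "nbrs w x \<subseteq> A"
  shows "2 * Gamma w m f x * m x = (\<Sum>y\<in>A. w x y * (f y - f x)^2)"
proof -
  have "2 * Gamma w m f x * m x = (\<Sum>y\<in>nbrs w x. w x y * (f y - f x)^2)"
    unfolding Gamma_def sum_distrib_right using measure_pos[OF \<open>x \<in> V\<close>]
    by (simp add: sum_distrib_right)
  also have "\<dots> = (\<Sum>y\<in>A. w x y * (f y - f x)^2)"
    using assms(2,3) by (rule sum_nbrs_eq_sum_superset)
  finally show ?thesis .
qed

lemma green_formula:
  assumes "finite A" "A \<subseteq> V" and "\<And>x. x \<in> A \<Longrightarrow> c x \<noteq> 0 \<Longrightarrow> nbrs w x \<subseteq> A"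
  shows "(\<Sum>x\<in>A. c x * laplacian w m h x * m x) =
    - (\<Sum>x\<in>A. \<Sum>y\<in>A. w x y * ((c y - c x) * (h y - h x))) / 2"
proof -
  have "c x * laplacian w m h x * m x = (\<Sum>y\<in>A. w x y * (c x * (h y - h x)))" if "x \<in> A" for x
  proof (cases "c x = 0")
    case False
    with that assms have "m x * laplacian w m h x = (\<Sum>y\<in>A. w x y * (h y - h x))"
      by (intro laplacian_eq_sum) auto
    then show ?thesis by (simp add: sum_distrib_left algebra_simps)
  qed simp
  then have "(\<Sum>x\<in>A. c x * laplacian w m h x * m x) = (\<Sum>x\<in>A. \<Sum>y\<in>A. w x y * (c x * (h y - h x)))"
    by (rule sum.cong[OF refl])
  also have "\<dots> = - (\<Sum>x\<in>A. \<Sum>y\<in>A. w x y * ((c y - c x) * (h y - h x))) / 2"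
    using sum_by_parts_symmetric[of w] weight_sym by blast
  finally show ?thesis .
qed

end

locale cutoff_setting = wgraph +
  fixes \<rho> :: "nat \<Rightarrow> nat \<Rightarrow> real" and x0 :: nat and R :: nat
  assumes intrinsic: "intrinsic_pseudometric V w m \<rho>"
    and finite_balls: "\<And>r. finite (rball V \<rho> x0 r)"
    and center_in_V: "x0 \<in> V"
    and jump_le_R: "\<And>x y. w x y > 0 \<Longrightarrow> \<rho> x y \<le> real R"
    and R_ge_1: "1 \<le> R"
begin

definition dist0 :: "nat \<Rightarrow> real" where
  "dist0 x = \<rho> x x0"
definition ball0 :: "real \<Rightarrow> nat set" where
  "ball0 c = rball V \<rho> x0 (c * real R)"
definition cutoff :: "real \<Rightarrow> nat \<Rightarrow> real" where
  "cutoff c x = min 1 (max 0 (c - dist0 x / real R))"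

lemma R_pos: "0 < real R"
  using R_ge_1 by simp

lemma sum_weights_rho_sq_le_measure:
  assumes "x \<in> V" "finite A"
  shows "(\<Sum>y\<in>A. w x y * (\<rho> x y)^2) \<le> m x"
  using sum_superset_le_sum_nbrs[OF assms, of "\<lambda>y. (\<rho> x y)^2"] assms(1) intrinsic
  unfolding intrinsic_pseudometric_def by fastforce

lemma rho_sym: "x \<in> V \<Longrightarrow> y \<in> V \<Longrightarrow> \<rho> x y = \<rho> y x"
  using intrinsic unfolding intrinsic_pseudometric_def by blast

lemma rho_triangle: "x \<in> V \<Longrightarrow> y \<in> V \<Longrightarrow> z \<in> V \<Longrightarrow> \<rho> x z \<le> \<rho> x y + \<rho> y z"
  using intrinsic unfolding intrinsic_pseudometric_def by blast

lemma dist0_lipschitz: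
  assumes "x \<in> V" "y \<in> V"
  shows "\<bar>dist0 y - dist0 x\<bar> \<le> \<rho> x y"
  using rho_triangle[of y x x0] rho_triangle[of x y x0] rho_sym[of x y] assms center_in_V
  unfolding dist0_def by auto

lemma dist0_edge: "w x y > 0 \<Longrightarrow> dist0 y \<le> dist0 x + real R"
  using dist0_lipschitz[of x y] weight_pos_imp_in_V[of x y] jump_le_R[of x y] by linarith

lemma mem_ball0: "x \<in> ball0 c \<longleftrightarrow> x \<in> V \<and> dist0 x \<le> c * real R"
  unfolding ball0_def rball_def dist0_def by auto

lemma finite_ball0: "finite (ball0 c)"
  unfolding ball0_def by (rule finite_balls)

lemma ball0_subset_V: "ball0 c \<subseteq> V"
  using mem_ball0 by blast

lemma measure_nonneg_ball0: "x \<in> ball0 c \<Longrightarrow> 0 \<le> m x"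
  using measure_pos ball0_subset_V less_imp_le by blast

lemma ball0_mono: "c \<le> d \<Longrightarrow> ball0 c \<subseteq> ball0 d"
  unfolding mem_ball0 subset_iff using R_pos
  by (meson mult_right_mono less_imp_le order_trans)

lemma nbrs_subset_ball0:
  assumes "x \<in> V" "dist0 x \<le> c * real R"
  shows "nbrs w x \<subseteq> ball0 (c + 1)"
proof
  fix y assume "y \<in> nbrs w x"
  then have "w x y > 0" unfolding nbrs_def by simp
  then show "y \<in> ball0 (c + 1)"
    unfolding mem_ball0 using dist0_edge[of x y] weight_pos_imp_in_V[of x y] assms(2)
    by (simp add: algebra_simps)
qed

lemma cutoff_nonneg: "0 \<le> cutoff c x"
  unfolding cutoff_def by simp

lemma cutoff_le_1: "cutoff c x \<le> 1"
  unfolding cutoff_def by simp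

lemma cutoff_sq_le_1: "(cutoff c x)^2 \<le> 1"
  using cutoff_nonneg cutoff_le_1 by (simp add: power_le_one)

lemma cutoff_eq_1: "dist0 x \<le> (c - 1) * real R \<Longrightarrow> cutoff c x = 1"
  unfolding cutoff_def using R_pos by (simp add: field_simps)

lemma cutoff_nonzero_imp: "cutoff c x \<noteq> 0 \<Longrightarrow> dist0 x < c * real R"
  unfolding cutoff_def using R_pos by (auto simp: field_simps min_def max_def split: if_splits)

lemma nbrs_subset_ball0_9:
  assumes "x \<in> V" "cutoff c x \<noteq> 0" "c \<le> 8"
  shows "nbrs w x \<subseteq> ball0 9"
proof -
  have "c * real R \<le> 8 * real R"
    using assms(3) R_pos by simp
  then have "dist0 x \<le> 8 * real R"
    using cutoff_nonzero_imp[OF assms(2)] by linarith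
  from nbrs_subset_ball0[OF assms(1) this] show ?thesis by simp
qed

lemma cutoff_diff_sq_le:
  assumes "x \<in> V" "y \<in> V"
  shows "(cutoff c y - cutoff c x)^2 \<le> (\<rho> x y)^2 / (real R)^2"
proof -
  have "\<bar>cutoff c y - cutoff c x\<bar> \<le> \<bar>(c - dist0 y / real R) - (c - dist0 x / real R)\<bar>"
    unfolding cutoff_def by (rule clamp_lipschitz)
  also have "\<dots> = \<bar>dist0 y - dist0 x\<bar> / real R"
    using R_pos by (simp add: diff_divide_distrib[symmetric] abs_minus_commute)
  also have "\<dots> \<le> \<rho> x y / real R"
    using dist0_lipschitz[OF assms] R_pos by (simp add: divide_right_mono)
  finally have "\<bar>cutoff c y - cutoff c x\<bar>^2 \<le> (\<rho> x y / real R)^2"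
    by (rule power_mono) simp
  then show ?thesis by (simp add: power_divide)
qed

definition local_mass :: "(nat \<Rightarrow> real) \<Rightarrow> real" where
  "local_mass h = (\<Sum>x\<in>ball0 9. (h x)^2 * m x)"
definition cutoff_mass :: "real \<Rightarrow> (nat \<Rightarrow> real) \<Rightarrow> real" where
  "cutoff_mass c h = (\<Sum>x\<in>ball0 9. (cutoff c x)^2 * (h x)^2 * m x)"
definition cutoff_energy :: "(nat \<Rightarrow> real) \<Rightarrow> real" where
  "cutoff_energy h =
  (\<Sum>x\<in>ball0 9. \<Sum>y\<in>ball0 9. w x y * (cutoff 4 y * h y - cutoff 4 x * h x)^2)"
definition cutoff_product_energy :: "(nat \<Rightarrow> real) \<Rightarrow> real" where
  "cutoff_product_energy h =
  (\<Sum>x\<in>ball0 9. \<Sum>y\<in>ball0 9. w x y * (cutoff 2 x * cutoff 2 y * (h y - h x)^2))"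
definition inner_energy :: "(nat \<Rightarrow> real) \<Rightarrow> real" where
  "inner_energy h =
  (\<Sum>x\<in>ball0 9. \<Sum>y\<in>ball0 9. w x y * (of_bool (dist0 x < 2 * real R) * (h y - h x)^2))"

lemma local_mass_nonneg: "0 \<le> local_mass h"
  unfolding local_mass_def by (intro sum_nonneg mult_nonneg_nonneg measure_nonneg_ball0) auto

lemma cutoff_mass_nonneg: "0 \<le> cutoff_mass c h"
  unfolding cutoff_mass_def by (intro sum_nonneg mult_nonneg_nonneg measure_nonneg_ball0) auto

lemma cutoff_energy_nonneg: "0 \<le> cutoff_energy h"
  unfolding cutoff_energy_def by (intro sum_nonneg mult_nonneg_nonneg weight_nonneg) auto

lemma cutoff_product_energy_nonneg: "0 \<le> cutoff_product_energy h"
  unfolding cutoff_product_energy_def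
  by (intro sum_nonneg mult_nonneg_nonneg weight_nonneg cutoff_nonneg) auto

lemma inner_energy_nonneg: "0 \<le> inner_energy h"
  unfolding inner_energy_def by (intro sum_nonneg mult_nonneg_nonneg weight_nonneg) auto

lemma cutoff_mass_le_local_mass: "cutoff_mass c h \<le> local_mass h"
  unfolding cutoff_mass_def local_mass_def
proof (rule sum_mono)
  fix x assume "x \<in> ball0 9"
  then have "0 \<le> (h x)^2 * m x"
    using measure_nonneg_ball0 by simp
  then have "(cutoff c x)^2 * ((h x)^2 * m x) \<le> 1 * ((h x)^2 * m x)"
    by (intro mult_right_mono cutoff_sq_le_1)
  then show "(cutoff c x)^2 * (h x)^2 * m x \<le> (h x)^2 * m x"
    by (simp add: mult.assoc)
qed

lemma cutoff_variation_le_local_mass: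
  "(\<Sum>x\<in>ball0 9. \<Sum>y\<in>ball0 9. w x y * (h x * h y * (cutoff c y - cutoff c x)^2))
    \<le> local_mass h / (real R)^2"
proof -
  let ?B = "ball0 9" and ?e = "cutoff c"
  have "(\<Sum>x\<in>?B. \<Sum>y\<in>?B. w x y * (h x * h y * (?e y - ?e x)^2))
      \<le> (\<Sum>x\<in>?B. \<Sum>y\<in>?B. w x y * (((h x)^2 + (h y)^2) / 2 * (?e y - ?e x)^2))"
    by (intro sum_mono mult_left_mono mult_right_mono weight_nonneg product_le_half_sum_squares) auto
  also have "\<dots> = ((\<Sum>x\<in>?B. \<Sum>y\<in>?B. w x y * ((h x)^2 * (?e y - ?e x)^2))
      + (\<Sum>x\<in>?B. \<Sum>y\<in>?B. w x y * ((h y)^2 * (?e y - ?e x)^2))) / 2"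
    by (simp add: sum.distrib[symmetric] sum_distrib_left sum_divide_distrib algebra_simps
        add_divide_distrib)
  also have "(\<Sum>x\<in>?B. \<Sum>y\<in>?B. w x y * ((h y)^2 * (?e y - ?e x)^2))
      = (\<Sum>x\<in>?B. \<Sum>y\<in>?B. w x y * ((h x)^2 * (?e y - ?e x)^2))"
    by (subst sum_sum_swap_symmetric[OF weight_sym]) (simp add: power2_commute)
  also have "(\<Sum>x\<in>?B. \<Sum>y\<in>?B. w x y * ((h x)^2 * (?e y - ?e x)^2))
      \<le> (\<Sum>x\<in>?B. \<Sum>y\<in>?B. w x y * ((h x)^2 * ((\<rho> x y)^2 / (real R)^2)))"
    using ball0_subset_V
    by (intro sum_mono mult_left_mono weight_nonneg cutoff_diff_sq_le zero_le_power2) auto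
  also have "\<dots> = (\<Sum>x\<in>?B. (h x)^2 / (real R)^2 * (\<Sum>y\<in>?B. w x y * (\<rho> x y)^2))"
    by (simp add: sum_distrib_left algebra_simps)
  also have "\<dots> \<le> (\<Sum>x\<in>?B. (h x)^2 / (real R)^2 * m x)"
    using ball0_subset_V
    by (intro sum_mono mult_left_mono sum_weights_rho_sq_le_measure finite_ball0) auto
  also have "\<dots> = local_mass h / (real R)^2"
    unfolding local_mass_def by (simp add: sum_divide_distrib)
  finally show ?thesis by simp
qed

lemma green_formula_ball0_9:
  assumes "\<And>x. c x \<noteq> 0 \<Longrightarrow> cutoff d x \<noteq> 0" "d \<le> 8"
  shows "(\<Sum>x\<in>ball0 9. c x * laplacian w m h x * m x) =
    - (\<Sum>x\<in>ball0 9. \<Sum>y\<in>ball0 9. w x y * ((c y - c x) * (h y - h x))) / 2"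
  using assms ball0_subset_V
  by (intro green_formula finite_ball0 nbrs_subset_ball0_9[of _ d]) auto

text \<open>Testing the implicit Euler step h' = h - \<Delta>h against cutoff^2 * h.\<close>

lemma caccioppoli_step:
  assumes step: "\<And>x. x \<in> V \<Longrightarrow> h x - h' x = laplacian w m h x"
  shows "cutoff_mass 4 h - cutoff_mass 4 h' + cutoff_energy h \<le> local_mass h / (real R)^2"
proof -
  let ?B = "ball0 9" and ?e = "cutoff 4"
  define c where "c x = (?e x)^2 * h x" for x
  define L where "L = (\<Sum>x\<in>?B. c x * laplacian w m h x * m x)"
  have pointwise: "(c y - c x) * (h y - h x)
      = (?e y * h y - ?e x * h x)^2 - h x * h y * (?e y - ?e x)^2" for x y
    unfolding c_def by (simp add: power2_eq_square algebra_simps)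
  have "L = - (\<Sum>x\<in>?B. \<Sum>y\<in>?B. w x y * ((c y - c x) * (h y - h x))) / 2"
    unfolding L_def c_def by (rule green_formula_ball0_9[of _ 4]) auto
  also have "\<dots> = (- cutoff_energy h
      + (\<Sum>x\<in>?B. \<Sum>y\<in>?B. w x y * (h x * h y * (?e y - ?e x)^2))) / 2"
    unfolding pointwise cutoff_energy_def by (simp add: sum_subtractf right_diff_distrib)
  finally have L_eq: "L = \<dots>" .
  have "(cutoff_mass 4 h - cutoff_mass 4 h') / 2
      = (\<Sum>x\<in>?B. (?e x)^2 * m x * (((h x)^2 - (h' x)^2) / 2))"
    unfolding cutoff_mass_def sum_subtractf[symmetric] sum_divide_distrib
    by (rule sum.cong) (simp_all add: algebra_simps)
  also have "\<dots> \<le> (\<Sum>x\<in>?B. (?e x)^2 * m x * (h x * (h x - h' x)))"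
    by (intro sum_mono mult_left_mono half_diff_squares_le mult_nonneg_nonneg measure_nonneg_ball0)
      auto
  also have "\<dots> = L"
    unfolding L_def c_def using step ball0_subset_V by (intro sum.cong refl) auto
  finally have "(cutoff_mass 4 h - cutoff_mass 4 h') / 2 \<le> L" .
  with L_eq cutoff_variation_le_local_mass[of h 4] show ?thesis by simp
qed

lemma cutoff_cross_term_pointwise_le:
  assumes "x \<in> V" "y \<in> V"
  shows "- (g * (cutoff c y - cutoff c x) * cutoff c x * v)
    \<le> (\<rho> x y)^2 * ((cutoff c x)^2 * v^2) / 2 + of_bool (dist0 x < c * real R) * g^2 / (2 * (real R)^2)"
proof (cases "cutoff c x = 0")
  case False
  let ?d = "cutoff c y - cutoff c x" and ?ev = "cutoff c x * v"
  have "(real R)^2 * ?d^2 \<le> (\<rho> x y)^2"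
    using cutoff_diff_sq_le[OF assms, of c] R_pos by (simp add: field_simps)
  then have sq: "(real R * ?d * ?ev)^2 \<le> (\<rho> x y)^2 * ?ev^2"
    by (simp add: power_mult_distrib mult_right_mono)
  have "- (g * ?d * cutoff c x * v) = (- g / real R) * (real R * ?d * ?ev)"
    using R_pos by (simp add: field_simps)
  also have "\<dots> \<le> ((- g / real R)^2 + (real R * ?d * ?ev)^2) / 2"
    by (rule product_le_half_sum_squares)
  also have "\<dots> \<le> (g^2 / (real R)^2 + (\<rho> x y)^2 * ?ev^2) / 2"
    using sq by (simp add: power_divide)
  finally show ?thesis
    using cutoff_nonzero_imp[OF False] by (simp add: power_mult_distrib add_divide_distrib)
qed simp

lemma cutoff_time_cross_term_le:
  "- (\<Sum>x\<in>ball0 9. \<Sum>y\<in>ball0 9. w x y * ((h y - h x) * (cutoff 2 y - cutoff 2 x) * cutoff 2 x * v x))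
    \<le> cutoff_mass 2 v / 2 + inner_energy h / (2 * (real R)^2)"
proof -
  let ?B = "ball0 9" and ?e = "cutoff 2"
  have "- (\<Sum>x\<in>?B. \<Sum>y\<in>?B. w x y * ((h y - h x) * (?e y - ?e x) * ?e x * v x))
      = (\<Sum>x\<in>?B. \<Sum>y\<in>?B. w x y * - ((h y - h x) * (?e y - ?e x) * ?e x * v x))"
    by (simp add: sum_negf[symmetric])
  also have "\<dots> \<le> (\<Sum>x\<in>?B. \<Sum>y\<in>?B. w x y * ((\<rho> x y)^2 * ((?e x)^2 * (v x)^2) / 2
      + of_bool (dist0 x < 2 * real R) * (h y - h x)^2 / (2 * (real R)^2)))"
    using ball0_subset_V
    by (intro sum_mono mult_left_mono weight_nonneg cutoff_cross_term_pointwise_le) auto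
  also have "\<dots> = (\<Sum>x\<in>?B. (?e x)^2 * (v x)^2 / 2 * (\<Sum>y\<in>?B. w x y * (\<rho> x y)^2))
      + inner_energy h / (2 * (real R)^2)"
    unfolding inner_energy_def sum_divide_distrib sum.distrib[symmetric] sum_distrib_left
    by (intro sum.cong refl) (simp add: algebra_simps)
  also have "\<dots> \<le> (\<Sum>x\<in>?B. (?e x)^2 * (v x)^2 / 2 * m x) + inner_energy h / (2 * (real R)^2)"
    using ball0_subset_V
    by (intro add_right_mono sum_mono mult_left_mono sum_weights_rho_sq_le_measure finite_ball0)
      auto
  also have "\<dots> = cutoff_mass 2 v / 2 + inner_energy h / (2 * (real R)^2)"
    unfolding cutoff_mass_def sum_divide_distrib by (simp add: algebra_simps)
  finally show ?thesis .
qed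

lemma cutoff_product_energy_diff_le:
  "cutoff_product_energy h - cutoff_product_energy h' \<le> 2 * (\<Sum>x\<in>ball0 9. \<Sum>y\<in>ball0 9.
    w x y * (cutoff 2 x * cutoff 2 y * ((h y - h x) * ((h y - h x) - (h' y - h' x)))))"
proof -
  let ?B = "ball0 9" and ?e = "cutoff 2"
  have "(cutoff_product_energy h - cutoff_product_energy h') / 2 = (\<Sum>x\<in>?B. \<Sum>y\<in>?B. w x y *
      (?e x * ?e y * (((h y - h x)^2 - (h' y - h' x)^2) / 2)))"
    unfolding cutoff_product_energy_def sum_subtractf[symmetric] sum_divide_distrib
    by (intro sum.cong refl) (simp add: algebra_simps)
  also have "\<dots> \<le> (\<Sum>x\<in>?B. \<Sum>y\<in>?B.
      w x y * (?e x * ?e y * ((h y - h x) * ((h y - h x) - (h' y - h' x)))))"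
    by (intro sum_mono mult_left_mono weight_nonneg half_diff_squares_le mult_nonneg_nonneg
        cutoff_nonneg)
  finally show ?thesis by simp
qed

text \<open>Testing the implicit Euler step against cutoff^2 * (h - h'), with the product of the
  cutoffs redistributed over the two endpoints of each edge.\<close>

lemma time_derivative_step:
  assumes step: "\<And>x. x \<in> V \<Longrightarrow> h x - h' x = laplacian w m h x"
  shows "2 * cutoff_mass 2 (\<lambda>x. h x - h' x) + cutoff_product_energy h - cutoff_product_energy h'
    \<le> 2 * inner_energy h / (real R)^2"
proof -
  let ?B = "ball0 9" and ?e = "cutoff 2"
  define v where "v x = h x - h' x" for x
  define c where "c x = (?e x)^2 * v x" for x
  define T1 where "T1 = (\<Sum>x\<in>?B. \<Sum>y\<in>?B. w x y *
      (?e x * ?e y * ((h y - h x) * ((h y - h x) - (h' y - h' x)))))"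
  define T2 where "T2 = (\<Sum>x\<in>?B. \<Sum>y\<in>?B. w x y * ((h y - h x) * (?e y - ?e x) * ?e y * v y))"
  define T3 where "T3 = (\<Sum>x\<in>?B. \<Sum>y\<in>?B. w x y * ((h y - h x) * (?e y - ?e x) * ?e x * v x))"
  have pointwise: "w x y * ((c y - c x) * (h y - h x))
      = w x y * (?e x * ?e y * ((h y - h x) * ((h y - h x) - (h' y - h' x))))
      + w x y * ((h y - h x) * (?e y - ?e x) * ?e y * v y)
      + w x y * ((h y - h x) * (?e y - ?e x) * ?e x * v x)" for x y
    unfolding c_def v_def by (simp add: power2_eq_square algebra_simps)
  have "cutoff_mass 2 v = (\<Sum>x\<in>?B. c x * laplacian w m h x * m x)"
    unfolding cutoff_mass_def c_def using step ball0_subset_V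
    by (intro sum.cong refl) (auto simp: v_def power2_eq_square)
  also have "\<dots> = - (T1 + T2 + T3) / 2"
    unfolding T1_def T2_def T3_def sum.distrib[symmetric] pointwise[symmetric]
    by (rule green_formula_ball0_9[of _ 2]) (auto simp: c_def)
  finally have X_eq: "2 * cutoff_mass 2 v = - (T1 + T2 + T3)" by simp
  have "T2 = (\<Sum>x\<in>?B. \<Sum>y\<in>?B. w x y * ((h x - h y) * (?e x - ?e y) * ?e x * v x))"
    unfolding T2_def by (rule sum_sum_swap_symmetric[OF weight_sym])
  also have "\<dots> = T3"
    unfolding T3_def by (intro sum.cong refl) (simp add: algebra_simps)
  finally have "T2 = T3" .
  have "cutoff_product_energy h - cutoff_product_energy h' \<le> 2 * T1"
    unfolding T1_def by (rule cutoff_product_energy_diff_le)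
  moreover have "- 2 * T3 \<le> cutoff_mass 2 v + inner_energy h / (real R)^2"
    using cutoff_time_cross_term_le[of h v] unfolding T3_def by simp
  ultimately have "2 * cutoff_mass 2 v + cutoff_product_energy h - cutoff_product_energy h'
      \<le> 2 * (inner_energy h / (real R)^2)"
    using X_eq \<open>T2 = T3\<close> by linarith
  then show ?thesis
    unfolding v_def by simp
qed

lemma cutoff_sq_le_indicator: "(cutoff c x)^2 \<le> of_bool (dist0 x < c * real R)"
  using cutoff_nonzero_imp[of c x] cutoff_sq_le_1[of c x] by (cases "cutoff c x = 0") auto

lemma cutoff_product_energy_le_inner_energy: "cutoff_product_energy h \<le> inner_energy h"
proof -
  let ?B = "ball0 9" and ?e = "cutoff 2"
  have "cutoff_product_energy h
      \<le> (\<Sum>x\<in>?B. \<Sum>y\<in>?B. w x y * (((?e x)^2 + (?e y)^2) / 2 * (h y - h x)^2))"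
    unfolding cutoff_product_energy_def
    by (intro sum_mono mult_left_mono mult_right_mono weight_nonneg product_le_half_sum_squares)
      auto
  also have "\<dots> = ((\<Sum>x\<in>?B. \<Sum>y\<in>?B. w x y * ((?e x)^2 * (h y - h x)^2))
      + (\<Sum>x\<in>?B. \<Sum>y\<in>?B. w x y * ((?e y)^2 * (h y - h x)^2))) / 2"
    by (simp add: sum.distrib[symmetric] sum_distrib_left sum_divide_distrib algebra_simps
        add_divide_distrib)
  also have "(\<Sum>x\<in>?B. \<Sum>y\<in>?B. w x y * ((?e y)^2 * (h y - h x)^2))
      = (\<Sum>x\<in>?B. \<Sum>y\<in>?B. w x y * ((?e x)^2 * (h y - h x)^2))"
    by (subst sum_sum_swap_symmetric[OF weight_sym]) (simp add: power2_commute)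
  also have "(\<Sum>x\<in>?B. \<Sum>y\<in>?B. w x y * ((?e x)^2 * (h y - h x)^2)) \<le> inner_energy h"
    unfolding inner_energy_def
    by (intro sum_mono mult_left_mono mult_right_mono weight_nonneg cutoff_sq_le_indicator) auto
  finally show ?thesis by simp
qed

text \<open>An edge starting in the open ball of radius 2R ends in the ball of radius 3R, where
  cutoff 4 is identically one.\<close>

lemma inner_energy_le_cutoff_energy: "inner_energy h \<le> cutoff_energy h"
  unfolding inner_energy_def cutoff_energy_def
proof (intro sum_mono)
  fix x y
  show "w x y * (of_bool (dist0 x < 2 * real R) * (h y - h x)^2)
      \<le> w x y * (cutoff 4 y * h y - cutoff 4 x * h x)^2"
  proof (cases "dist0 x < 2 * real R \<and> w x y > 0")
    case True
    then have "cutoff 4 x = 1" "cutoff 4 y = 1"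
      using dist0_edge[of x y] by (auto intro: cutoff_eq_1)
    with True show ?thesis by simp
  next
    case False
    then have "of_bool (dist0 x < 2 * real R) = (0::real) \<or> w x y = 0"
      using weight_eq_0 by auto
    then show ?thesis using weight_nonneg[of x y] by auto
  qed
qed

lemma Gamma_sum_le_inner_energy:
  "2 * (\<Sum>x\<in>ball0 1. Gamma w m h x * m x) \<le> inner_energy h"
proof -
  have "2 * (\<Sum>x\<in>ball0 1. Gamma w m h x * m x)
      = (\<Sum>x\<in>ball0 1. \<Sum>y\<in>ball0 9. w x y * (of_bool (dist0 x < 2 * real R) * (h y - h x)^2))"
    unfolding sum_distrib_left
  proof (rule sum.cong[OF refl])
    fix x assume "x \<in> ball0 1"
    then have x: "x \<in> V" "dist0 x \<le> 1 * real R"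
      unfolding mem_ball0 by auto
    then have "dist0 x < 2 * real R"
      using R_pos by simp
    moreover have "nbrs w x \<subseteq> ball0 9"
      using nbrs_subset_ball0[OF x] ball0_mono[of 2 9] by simp
    ultimately show "2 * (Gamma w m h x * m x)
        = (\<Sum>y\<in>ball0 9. w x y * (of_bool (dist0 x < 2 * real R) * (h y - h x)^2))"
      using Gamma_eq_sum[OF x(1) finite_ball0] by (simp add: mult.assoc)
  qed
  also have "\<dots> \<le> inner_energy h"
    unfolding inner_energy_def using ball0_mono[of 1 9]
    by (intro sum_mono2 finite_ball0 sum_nonneg mult_nonneg_nonneg weight_nonneg) auto
  finally show ?thesis .
qed

lemma sum_ball0_1_le_cutoff_mass: "(\<Sum>x\<in>ball0 1. (v x)^2 * m x) \<le> cutoff_mass 2 v"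
proof -
  have "(\<Sum>x\<in>ball0 1. (v x)^2 * m x) = (\<Sum>x\<in>ball0 1. (cutoff 2 x)^2 * (v x)^2 * m x)"
    by (intro sum.cong refl) (simp add: mem_ball0 cutoff_eq_1)
  also have "\<dots> \<le> cutoff_mass 2 v"
    unfolding cutoff_mass_def using ball0_mono[of 1 9]
    by (intro sum_mono2 finite_ball0 mult_nonneg_nonneg measure_nonneg_ball0) auto
  finally show ?thesis .
qed

end

lemma sumQ_eq_sum_nat:
  "sumQ V \<rho> m x0 r F = (\<Sum>k\<le>r^2. \<Sum>x\<in>rball V \<rho> x0 (real r). F x (- int k) * m x)"
  unfolding sumQ_def using sum_nonpos_int_eq_sum_nat[where N = "r^2"] by simp

lemma sumQ_nonneg:
  assumes "\<And>x. x \<in> V \<Longrightarrow> 0 < m x" "\<And>x t. 0 \<le> F x t"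
  shows "0 \<le> sumQ V \<rho> m x0 r F"
  unfolding sumQ_def rball_def using assms
  by (intro sum_nonneg mult_nonneg_nonneg) (auto intro: less_imp_le)

locale ancient_setting = cutoff_setting +
  fixes u :: "nat \<Rightarrow> int \<Rightarrow> real"
  assumes ancient: "ancient_solution V w m u"
begin

definition slice :: "nat \<Rightarrow> nat \<Rightarrow> real" where
  "slice k x = u x (- int k)"

lemma slice_Suc: "slice (Suc k) x = u x (- int k - 1)"
  unfolding slice_def by (rule arg_cong[where f = "u x"]) simp

lemma slice_step: "x \<in> V \<Longrightarrow> slice k x - slice (Suc k) x = laplacian w m (slice k) x"
proof -
  assume "x \<in> V"
  with ancient have "\<forall>t \<le> 0. u x t - u x (t - 1) = laplacian w m (\<lambda>y. u y t) x"
    unfolding ancient_solution_def by blast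
  then have "u x (- int k) - u x (- int k - 1) = laplacian w m (\<lambda>y. u y (- int k)) x"
    by simp
  moreover have "slice k = (\<lambda>y. u y (- int k))"
    by (rule ext) (simp add: slice_def)
  ultimately show ?thesis
    by (metis slice_def slice_Suc)
qed

lemma cutoff_energy_sum_le:
  "(real R)^2 * (\<Sum>k\<le>2 * R^2. cutoff_energy (slice k)) \<le> 2 * (\<Sum>k\<le>3 * R^2. local_mass (slice k))"
proof -
  have "real (R^2) * (\<Sum>k\<le>2 * R^2. cutoff_energy (slice k))
      \<le> (1 + 1) * (\<Sum>k\<le>2 * R^2 + R^2. local_mass (slice k))"
  proof (rule telescoping_average)
    show "cutoff_energy (slice k) + cutoff_mass 4 (slice k) - cutoff_mass 4 (slice (Suc k))
        \<le> 1 * local_mass (slice k) / real (R^2)" for k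
      using caccioppoli_step[of "slice k" "slice (Suc k)"] slice_step by simp
  qed (use R_ge_1 in \<open>auto intro: cutoff_mass_nonneg cutoff_mass_le_local_mass
      cutoff_energy_nonneg local_mass_nonneg\<close>)
  then show ?thesis by simp
qed

lemma time_derivative_sum_le:
  "2 * (real R)^2 * (\<Sum>k\<le>R^2. cutoff_mass 2 (\<lambda>x. slice k x - slice (Suc k) x))
    \<le> 3 * (\<Sum>k\<le>2 * R^2. inner_energy (slice k))"
proof -
  have "real (R^2) * (\<Sum>k\<le>R^2. 2 * cutoff_mass 2 (\<lambda>x. slice k x - slice (Suc k) x))
      \<le> (1 + 2) * (\<Sum>k\<le>R^2 + R^2. inner_energy (slice k))"
  proof (rule telescoping_average)
    show "2 * cutoff_mass 2 (\<lambda>x. slice k x - slice (Suc k) x) + cutoff_product_energy (slice k)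
        - cutoff_product_energy (slice (Suc k)) \<le> 2 * inner_energy (slice k) / real (R^2)" for k
      using time_derivative_step[of "slice k" "slice (Suc k)"] slice_step by simp
  qed (use R_ge_1 in \<open>auto intro: cutoff_mass_nonneg cutoff_product_energy_nonneg
      cutoff_product_energy_le_inner_energy inner_energy_nonneg\<close>)
  moreover have "R^2 + R^2 = 2 * R^2" by simp
  ultimately show ?thesis by (simp add: sum_distrib_left[symmetric] mult_ac)
qed

lemma Dt_slice: "Dt u x (- int k) = slice k x - slice (Suc k) x"
  unfolding Dt_def slice_Suc by (simp add: slice_def)

lemma gradient_estimate:
  "(real R)^2 * sumQ V \<rho> m x0 R (\<lambda>x t. Gamma w m (\<lambda>y. u y t) x)
    \<le> (\<Sum>k\<le>3 * R^2. local_mass (slice k))"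
proof -
  have "sumQ V \<rho> m x0 R (\<lambda>x t. Gamma w m (\<lambda>y. u y t) x)
      = (\<Sum>k\<le>R^2. \<Sum>x\<in>ball0 1. Gamma w m (slice k) x * m x)"
    unfolding sumQ_eq_sum_nat ball0_def slice_def[abs_def] by simp
  also have "\<dots> \<le> (\<Sum>k\<le>R^2. inner_energy (slice k) / 2)"
  proof (rule sum_mono)
    fix k
    show "(\<Sum>x\<in>ball0 1. Gamma w m (slice k) x * m x) \<le> inner_energy (slice k) / 2"
      using Gamma_sum_le_inner_energy[of "slice k"] by linarith
  qed
  also have "\<dots> \<le> (\<Sum>k\<le>2 * R^2. inner_energy (slice k) / 2)"
    by (intro sum_mono2) (auto intro: inner_energy_nonneg)
  also have "\<dots> \<le> (\<Sum>k\<le>2 * R^2. cutoff_energy (slice k) / 2)"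
    by (intro sum_mono divide_right_mono inner_energy_le_cutoff_energy) auto
  finally have "sumQ V \<rho> m x0 R (\<lambda>x t. Gamma w m (\<lambda>y. u y t) x)
      \<le> (\<Sum>k\<le>2 * R^2. cutoff_energy (slice k)) / 2"
    by (simp add: sum_divide_distrib)
  then have "(real R)^2 * sumQ V \<rho> m x0 R (\<lambda>x t. Gamma w m (\<lambda>y. u y t) x)
      \<le> (real R)^2 * ((\<Sum>k\<le>2 * R^2. cutoff_energy (slice k)) / 2)"
    by (rule mult_left_mono) simp
  also have "\<dots> \<le> (\<Sum>k\<le>3 * R^2. local_mass (slice k))"
    using cutoff_energy_sum_le by simp
  finally show ?thesis .
qed

lemma time_derivative_estimate:
  "(real R)^4 * sumQ V \<rho> m x0 R (\<lambda>x t. (Dt u x t)^2)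
    \<le> 3 * (\<Sum>k\<le>3 * R^2. local_mass (slice k))"
proof -
  have "sumQ V \<rho> m x0 R (\<lambda>x t. (Dt u x t)^2)
      = (\<Sum>k\<le>R^2. \<Sum>x\<in>ball0 1. (slice k x - slice (Suc k) x)^2 * m x)"
    unfolding sumQ_eq_sum_nat ball0_def Dt_slice by simp
  also have "\<dots> \<le> (\<Sum>k\<le>R^2. cutoff_mass 2 (\<lambda>x. slice k x - slice (Suc k) x))"
    by (rule sum_mono) (rule sum_ball0_1_le_cutoff_mass)
  finally have "2 * (real R)^2 * sumQ V \<rho> m x0 R (\<lambda>x t. (Dt u x t)^2)
      \<le> 3 * (\<Sum>k\<le>2 * R^2. inner_energy (slice k))"
    using time_derivative_sum_le by (smt (verit) mult_left_mono zero_le_power2)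
  also have "\<dots> \<le> 3 * (\<Sum>k\<le>2 * R^2. cutoff_energy (slice k))"
    by (intro mult_left_mono sum_mono inner_energy_le_cutoff_energy) auto
  finally have "(real R)^2 * (2 * (real R)^2 * sumQ V \<rho> m x0 R (\<lambda>x t. (Dt u x t)^2))
      \<le> (real R)^2 * (3 * (\<Sum>k\<le>2 * R^2. cutoff_energy (slice k)))"
    by (rule mult_left_mono) simp
  also have "\<dots> \<le> 3 * (2 * (\<Sum>k\<le>3 * R^2. local_mass (slice k)))"
    using cutoff_energy_sum_le by simp
  finally show ?thesis
    by (simp add: power_add[of "real R" 2 2, simplified] mult_ac)
qed

lemma local_mass_sum_le_sumQ:
  "(\<Sum>k\<le>3 * R^2. local_mass (slice k)) \<le> sumQ V \<rho> m x0 (9 * R) (\<lambda>x t. (u x t)^2)"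
proof -
  have "sumQ V \<rho> m x0 (9 * R) (\<lambda>x t. (u x t)^2) = (\<Sum>k\<le>81 * R^2. local_mass (slice k))"
    unfolding sumQ_eq_sum_nat local_mass_def ball0_def slice_def by (simp add: power_mult_distrib)
  moreover have "(\<Sum>k\<le>3 * R^2. local_mass (slice k)) \<le> (\<Sum>k\<le>81 * R^2. local_mass (slice k))"
    by (intro sum_mono2) (auto intro: local_mass_nonneg)
  ultimately show ?thesis by simp
qed

end

lemma local_energy_estimate:
  assumes graph: "weighted_graph V w m" and "intrinsic_pseudometric V w m \<rho>"
    and "\<And>r. finite (rball V \<rho> x0 r)" and "x0 \<in> V"
    and "ancient_solution V w m u" and "\<And>x y. w x y > 0 \<Longrightarrow> \<rho> x y \<le> real R"
  shows "(real R)^2 * sumQ V \<rho> m x0 R (\<lambda>x t. Gamma w m (\<lambda>y. u y t) x)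
      + (real R)^4 * sumQ V \<rho> m x0 R (\<lambda>x t. (Dt u x t)^2)
    \<le> 4 * sumQ V \<rho> m x0 (9 * R) (\<lambda>x t. (u x t)^2)"
proof (cases "R = 0")
  case True
  have "0 \<le> sumQ V \<rho> m x0 (9 * R) (\<lambda>x t. (u x t)^2)"
    using graph unfolding weighted_graph_def by (intro sumQ_nonneg) auto
  with True show ?thesis by simp
next
  case False
  interpret ancient_setting V w m \<rho> x0 R u
    using assms False by unfold_locales auto
  show ?thesis
    using gradient_estimate time_derivative_estimate local_mass_sum_le_sumQ by linarith
qed

theorem theorem4p1:
  shows "\<exists>C::real. \<forall>V w m \<rho> x0 (u :: nat \<Rightarrow> int \<Rightarrow> real) (R::nat).
    weighted_graph V w m \<and>
    intrinsic_pseudometric V w m \<rho> \<and>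
    (\<forall>x\<in>V. \<forall>r. finite (rball V \<rho> x r)) \<and>
    (\<exists>S::real. \<forall>x y. w x y > 0 \<longrightarrow> \<rho> x y \<le> S) \<and>
    x0 \<in> V \<and>
    ancient_solution V w m u \<and>
    (\<forall>x y. w x y > 0 \<longrightarrow> \<rho> x y \<le> real R)
    \<longrightarrow>
    (real R)^2 * sumQ V \<rho> m x0 R (\<lambda>x t. Gamma w m (\<lambda>y. u y t) x)
      + (real R)^4 * sumQ V \<rho> m x0 R (\<lambda>x t. (Dt u x t)^2)
    \<le> C * sumQ V \<rho> m x0 (9 * R) (\<lambda>x t. (u x t)^2)"
proof (intro exI[of _ 4] allI impI, elim conjE)
  fix V w m \<rho> x0 and u :: "nat \<Rightarrow> int \<Rightarrow> real" and R :: nat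
  assume "weighted_graph V w m" "intrinsic_pseudometric V w m \<rho>"
    "\<forall>x\<in>V. \<forall>r. finite (rball V \<rho> x r)" "x0 \<in> V" "ancient_solution V w m u"
    "\<forall>x y. w x y > 0 \<longrightarrow> \<rho> x y \<le> real R"
  then show "(real R)^2 * sumQ V \<rho> m x0 R (\<lambda>x t. Gamma w m (\<lambda>y. u y t) x)
      + (real R)^4 * sumQ V \<rho> m x0 R (\<lambda>x t. (Dt u x t)^2)
    \<le> 4 * sumQ V \<rho> m x0 (9 * R) (\<lambda>x t. (u x t)^2)"
    by (intro local_energy_estimate) auto
qed

end
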